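(* Let $A\in\mathbb{C}^{n\times n}$ be Hermitian and let $Q\in\mathbb{C}^{n\times k}$, $2\le k\le n$, have orthonormal columns. Let $Q^*AQ=\Omega\widehat\Lambda\Omega^*$ be an eigendecomposition with $\Omega$ unitary and $\widehat\Lambda=\mathrm{diag}(\widehat\lambda_1,\ldots,\widehat\lambda_k)$, and let $\widehat X=[\widehat x_1,\ldots,\widehat x_k]=Q\Omega$ (Ritz values $\widehat\lambda_i$, Ritz vectors $\widehat x_i$). Let $Q_\perp\in\mathbb{C}^{n\times(n-k)}$ be such that $[Q\ Q_\perp]$ is unitary, so that $$[Q\Omega,\,Q_\perp]^*A[Q\Omega,\,Q_\perp]=\begin{bmatrix}\widehat\Lambda & R^*\\ R & A_3\end{bmatrix},\qquad R=Q_\perp^*AQ\Omega=[r_1,\ldots,r_k],\quad A_3=Q_\perp^*AQ_\perp .$$ Consider the Ritz pair $(\widehat\lambda,\widehat x)=(\widehat\lambda_1,\widehat x_1)$, let $\widehat\Lambda_2=\mathrm{diag}(\widehat\lambda_2,\ldots,\widehat\lambda_k)$ and $R_2=[r_2,\ldots,r_k]$. Let $(\lambda,x)$ be an eigenpair of $A$ with $\|x\|=1$, and define $\mathrm{Gap}=\min|\lambda-\lambda(A_3)|$ and $\mathrm{gap}=\min|\lambda-\lambda(\widehat\Lambda_2)|$. Then $$\sin\angle(x,\widehat x)\le\frac{\|R\|}{\mathrm{Gap}}\sqrt{1+\frac{\|R_2\|^2}{\mathrm{gap}^2}}\ \le\ \frac{\|R\|}{\mathrm{Gap}}\Big(1+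\frac{\|R_2\|}{\mathrm{gap}}\Big).$$
   Context: $\|\cdot\|$ is the Euclidean norm for vectors and the spectral norm for matrices. $\lambda(M)$ denotes the set of eigenvalues of a Hermitian matrix $M$, and $\min|\lambda-\lambda(M)|$ is the distance from $\lambda$ to that set. For unit vectors, $\angle(x,\widehat x)=\arccos|\widehat x^*x|$. Note $\|r_i\|=\|A\widehat x_i-\widehat\lambda_i\widehat x_i\|$. A bound with a vanishing denominator is interpreted as $+\infty$. *)

theory Defs
  imports Complex_Main "HOL-Library.Extended_Real"
    "Jordan_Normal_Form.Schur_Decomposition" "Jordan_Normal_Form.Char_Poly"
begin

definition vnorm :: "complex vec \<Rightarrow> real" where
  "vnorm v = sqrt (\<Sum>i<dim_vec v. (cmod (v $ i))\<^sup>2)"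

definition snorm :: "complex mat \<Rightarrow> real" where
  "snorm M = Sup {vnorm (M *\<^sub>v v) | v. v \<in> carrier_vec (dim_col M) \<and> vnorm v = 1}"

definition cinner :: "complex vec \<Rightarrow> complex vec \<Rightarrow> complex" where
  "cinner y x = (\<Sum>i<dim_vec x. cnj (y $ i) * x $ i)"

definition vangle :: "complex vec \<Rightarrow> complex vec \<Rightarrow> real" where
  "vangle x xh = arccos (cmod (cinner xh x))"

definition hermitian :: "complex mat \<Rightarrow> bool" where
  "hermitian A \<longleftrightarrow> A \<in> carrier_mat (dim_row A) (dim_row A) \<and> mat_adjoint A = A"

definition unitary :: "complex mat \<Rightarrow> bool" where
  "unitary U \<longleftrightarrow> U \<in> carrier_mat (dim_row U) (dim_row U) \<and>
     mat_adjoint U * U = 1\<^sub>m (dim_row U) \<and> U * mat_adjoint U = 1\<^sub>m (dim_row U)"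

definition hcat :: "complex mat \<Rightarrow> complex mat \<Rightarrow> complex mat" where
  "hcat Q P = mat (dim_row Q) (dim_col Q + dim_col P)
     (\<lambda>(i,j). if j < dim_col Q then Q $$ (i,j) else P $$ (i, j - dim_col Q))"

definition diagm :: "nat \<Rightarrow> (nat \<Rightarrow> real) \<Rightarrow> complex mat" where
  "diagm m d = mat m m (\<lambda>(i,j). if i = j then complex_of_real (d i) else 0)"

text \<open>Distance from mu to the spectrum of M, min |mu - lambda(M)|, in the extended reals
  (it is +infinity when M has no eigenvalues, e.g. when M is 0 x 0).\<close>
definition dist_spec :: "complex \<Rightarrow> complex mat \<Rightarrow> ereal" where
  "dist_spec \<mu> M = Inf {ereal (cmod (\<mu> - \<nu>)) | \<nu>. eigenvalue M \<nu>}"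

end

theory Submission
  imports Defs "HOL-Analysis.L2_Norm" "Jordan_Normal_Form.Spectral_Radius"
begin

text \<open>
  Write the unit eigenvector \<open>x\<close> in the orthonormal basis \<open>[Q\<Omega>, Q\<^sub>p]\<close>: with
  \<open>a = (Q\<Omega>)\<^sup>* x\<close> and \<open>b = Q\<^sub>p\<^sup>* x\<close> we have \<open>|a|\<^sup>2 + |b|\<^sup>2 = 1\<close> and \<open>cos \<angle>(x, x\<^sub>1) = |a\<^sub>1|\<close>,
  so \<open>sin\<^sup>2 \<angle>(x, x\<^sub>1) = \<Sum>\<^bsub>i\<ge>2\<^esub> |a\<^sub>i|\<^sup>2 + |b|\<^sup>2\<close>. The two block rows of \<open>A x = \<lambda> x\<close> read
  \<open>(\<lambda> - A\<^sub>3) b = R a\<close> and \<open>(\<lambda> - \<lambda>\<^sub>i) a\<^sub>i = (R\<^sup>* b)\<^sub>i\<close>. As \<open>A\<^sub>3\<close> is Hermitian, the first gives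
  \<open>Gap |b| \<le> |R a| \<le> |R|\<close>, and the second gives \<open>gap\<^sup>2 \<Sum>\<^bsub>i\<ge>2\<^esub> |a\<^sub>i|\<^sup>2 \<le> |R\<^sub>2|\<^sup>2 |b|\<^sup>2\<close>.

  The resolvent bound \<open>|(\<mu> - H) v| \<ge> dist(\<mu>, \<lambda>(H)) |v|\<close> for Hermitian \<open>H\<close> is proved
  without a spectral theorem: by Schur triangularisation a product of shifts \<open>H - r\<close> over
  the eigenvalues \<open>r\<close> annihilates every vector, and peeling off one shift at a time splits
  \<open>v\<close> into mutually orthogonal eigenvectors.
\<close>

section \<open>Inner products, Euclidean and spectral norms\<close>

lemma dim_mat_adjoint [simp]:
  "dim_row (mat_adjoint M) = dim_col (M :: complex mat)" "dim_col (mat_adjoint M) = dim_row M"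
  unfolding mat_adjoint_def by (auto simp: mat_of_rows_def)

lemma mat_adjoint_carrier: "(M :: complex mat) \<in> carrier_mat r c \<Longrightarrow> mat_adjoint M \<in> carrier_mat c r"
  unfolding carrier_mat_def by simp

lemma index_mat_adjoint [simp]:
  "i < dim_col M \<Longrightarrow> j < dim_row M \<Longrightarrow> mat_adjoint M $$ (i,j) = cnj ((M :: complex mat) $$ (j,i))"
  unfolding mat_adjoint_def mat_of_rows_def by simp

lemma mat_adjoint_adjoint [simp]: "mat_adjoint (mat_adjoint M) = (M :: complex mat)"
  by (rule eq_matI) simp_all

lemma mat_adjoint_mult:
  fixes A B :: "complex mat"
  assumes "A \<in> carrier_mat r m" "B \<in> carrier_mat m c"
  shows "mat_adjoint (A * B) = mat_adjoint B * mat_adjoint A"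
proof (rule eq_matI)
  fix i j assume "i < dim_row (mat_adjoint B * mat_adjoint A)" "j < dim_col (mat_adjoint B * mat_adjoint A)"
  with assms have i: "i < c" and j: "j < r" by auto
  have "mat_adjoint (A * B) $$ (i, j) = (\<Sum>l<m. cnj (A $$ (j,l)) * cnj (B $$ (l,i)))"
    using i j assms by (auto simp: scalar_prod_def atLeast0LessThan)
  also have "\<dots> = (mat_adjoint B * mat_adjoint A) $$ (i, j)"
    using i j assms by (auto simp: scalar_prod_def atLeast0LessThan intro!: sum.cong)
  finally show "mat_adjoint (A * B) $$ (i, j) = (mat_adjoint B * mat_adjoint A) $$ (i, j)" .
qed (use assms in auto)

lemma index_mult_mat_vec_sum:
  "M \<in> carrier_mat r c \<Longrightarrow> v \<in> carrier_vec c \<Longrightarrow> i < r \<Longrightarrow> (M *\<^sub>v v) $ i = (\<Sum>j<c. M $$ (i,j) * v $ j)"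
  unfolding mult_mat_vec_def scalar_prod_def row_def by (simp add: atLeast0LessThan)

lemma cinner_add_right: "dim_vec v = dim_vec w \<Longrightarrow> cinner u (v + w) = cinner u v + cinner u w"
  by (simp add: cinner_def sum.distrib algebra_simps)

lemma cinner_add_left:
  "dim_vec u = dim_vec w \<Longrightarrow> dim_vec u = dim_vec v \<Longrightarrow> cinner (u + w) v = cinner u v + cinner w v"
  by (simp add: cinner_def sum.distrib algebra_simps)

lemma cinner_diff_right: "dim_vec v = dim_vec w \<Longrightarrow> cinner u (v - w) = cinner u v - cinner u w"
  by (simp add: cinner_def sum_subtractf algebra_simps)

lemma cinner_diff_left:
  "dim_vec u = dim_vec w \<Longrightarrow> dim_vec u = dim_vec v \<Longrightarrow> cinner (u - w) v = cinner u v - cinner w v"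
  by (simp add: cinner_def sum_subtractf algebra_simps)

lemma cinner_smult_right: "cinner u (c \<cdot>\<^sub>v v) = c * cinner u v"
  by (simp add: cinner_def sum_distrib_left algebra_simps)

lemma cinner_smult_left: "dim_vec u = dim_vec v \<Longrightarrow> cinner (c \<cdot>\<^sub>v u) v = cnj c * cinner u v"
  by (simp add: cinner_def sum_distrib_left algebra_simps)

lemma cinner_zero_left [simp]: "dim_vec v = n \<Longrightarrow> cinner (0\<^sub>v n) v = 0"
  by (simp add: cinner_def)

lemma cinner_zero_right [simp]: "cinner u (0\<^sub>v n) = 0"
  by (simp add: cinner_def)

lemma cinner_commute: "dim_vec u = dim_vec v \<Longrightarrow> cinner v u = cnj (cinner u v)"
  by (simp add: cinner_def mult.commute)

lemma cinner_mat_adjoint: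
  assumes M: "M \<in> carrier_mat r c" and u: "u \<in> carrier_vec r" and v: "v \<in> carrier_vec c"
  shows "cinner u (M *\<^sub>v v) = cinner (mat_adjoint M *\<^sub>v u) v"
proof -
  have "cinner u (M *\<^sub>v v) = (\<Sum>i<r. \<Sum>j<c. cnj (u $ i) * M $$ (i,j) * v $ j)"
    using assms by (simp add: cinner_def index_mult_mat_vec_sum sum_distrib_left mult.assoc
        del: index_mult_mat_vec)
  also have "\<dots> = (\<Sum>j<c. \<Sum>i<r. cnj (u $ i) * M $$ (i,j) * v $ j)"
    by (rule sum.swap)
  also have "\<dots> = cinner (mat_adjoint M *\<^sub>v u) v"
    using assms mat_adjoint_carrier[OF M]
    by (auto simp: cinner_def index_mult_mat_vec_sum sum_distrib_left sum_distrib_right ac_simps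
        simp del: index_mult_mat_vec intro!: sum.cong)
  finally show ?thesis .
qed

lemma vnorm_nonneg: "0 \<le> vnorm v"
  unfolding vnorm_def by (simp add: sum_nonneg)

lemma vnorm_sq: "(vnorm v)\<^sup>2 = (\<Sum>i<dim_vec v. (cmod (v $ i))\<^sup>2)"
  unfolding vnorm_def by (simp add: sum_nonneg)

lemma cinner_self: "cinner v v = of_real ((vnorm v)\<^sup>2)"
proof -
  have "cinner v v = (\<Sum>i<dim_vec v. of_real ((cmod (v $ i))\<^sup>2))"
    unfolding cinner_def by (intro sum.cong refl) (metis complex_norm_square mult.commute)
  then show ?thesis by (simp add: vnorm_sq)
qed

lemma vnorm_eq_zero_iff:
  assumes "v \<in> carrier_vec m"
  shows "vnorm v = 0 \<longleftrightarrow> v = 0\<^sub>v m"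
proof
  assume "vnorm v = 0"
  then have "\<forall>i\<in>{..<m}. (cmod (v $ i))\<^sup>2 = 0"
    using assms vnorm_sq[of v] by (simp add: sum_nonneg_eq_0_iff)
  then show "v = 0\<^sub>v m" using assms by (intro eq_vecI) auto
qed (simp add: vnorm_def)

lemma vnorm_smult: "vnorm (c \<cdot>\<^sub>v v) = cmod c * vnorm v"
  unfolding vnorm_def
  by (simp add: norm_mult power_mult_distrib sum_distrib_left[symmetric] real_sqrt_mult)

lemma norm_index_le_vnorm: "j < dim_vec v \<Longrightarrow> cmod (v $ j) \<le> vnorm v"
  unfolding vnorm_def
  by (rule real_le_rsqrt, rule member_le_sum[of j "{..<dim_vec v}" "\<lambda>i. (cmod (v $ i))\<^sup>2"]) auto

lemma vnorm_add_sq_orthogonal: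
  assumes "dim_vec u = dim_vec v" "cinner u v = 0"
  shows "(vnorm (u + v))\<^sup>2 = (vnorm u)\<^sup>2 + (vnorm v)\<^sup>2"
proof -
  have "cinner v u = 0" using assms cinner_commute[of u v] by simp
  have "of_real ((vnorm (u + v))\<^sup>2) = cinner (u + v) (u + v)"
    by (simp only: cinner_self)
  also have "\<dots> = cinner u u + cinner u v + cinner v u + cinner v v"
    using assms by (simp add: cinner_add_left cinner_add_right)
  also have "\<dots> = of_real ((vnorm u)\<^sup>2 + (vnorm v)\<^sup>2)"
    using assms \<open>cinner v u = 0\<close> by (simp add: cinner_self)
  finally show ?thesis using of_real_eq_iff by blast
qed

lemma cinner_Cauchy_Schwarz:
  assumes "dim_vec u = dim_vec v"
  shows "cmod (cinner u v) \<le> vnorm u * vnorm v"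
proof -
  have "cmod (cinner u v) \<le> (\<Sum>i<dim_vec v. \<bar>cmod (u $ i)\<bar> * \<bar>cmod (v $ i)\<bar>)"
    unfolding cinner_def by (rule order.trans[OF norm_sum]) (simp add: norm_mult)
  also have "\<dots> \<le> vnorm u * vnorm v"
    using L2_set_mult_ineq[of "\<lambda>i. cmod (u $ i)" "\<lambda>i. cmod (v $ i)" "{..<dim_vec v}"] assms
    by (simp add: vnorm_def L2_set_def)
  finally show ?thesis .
qed

lemma bdd_above_snorm_set:
  "bdd_above {vnorm (M *\<^sub>v v) | v. v \<in> carrier_vec (dim_col M) \<and> vnorm v = 1}"
proof (rule bdd_aboveI)
  let ?C = "sqrt (\<Sum>i<dim_row M. (\<Sum>j<dim_col M. cmod (M $$ (i,j)))\<^sup>2)"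
  fix y assume "y \<in> {vnorm (M *\<^sub>v v) | v. v \<in> carrier_vec (dim_col M) \<and> vnorm v = 1}"
  then obtain v where v: "v \<in> carrier_vec (dim_col M)" "vnorm v = 1" and y: "y = vnorm (M *\<^sub>v v)"
    by auto
  have "cmod ((M *\<^sub>v v) $ i) \<le> (\<Sum>j<dim_col M. cmod (M $$ (i,j)))" if "i < dim_row M" for i
  proof -
    have "(M *\<^sub>v v) $ i = (\<Sum>j<dim_col M. M $$ (i,j) * v $ j)"
      by (rule index_mult_mat_vec_sum) (use that v in auto)
    then have "cmod ((M *\<^sub>v v) $ i) \<le> (\<Sum>j<dim_col M. cmod (M $$ (i,j)) * cmod (v $ j))"
      by (simp add: norm_mult order.trans[OF norm_sum] del: index_mult_mat_vec)
    also have "\<dots> \<le> (\<Sum>j<dim_col M. cmod (M $$ (i,j)))"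
      using v norm_index_le_vnorm[of _ v] by (intro sum_mono mult_left_le) auto
    finally show ?thesis .
  qed
  then show "y \<le> ?C"
    unfolding y vnorm_def by (auto intro!: sum_mono power_mono)
qed

lemma snorm_mult_vec_le:
  assumes v: "v \<in> carrier_vec (dim_col M)"
  shows "vnorm (M *\<^sub>v v) \<le> snorm M * vnorm v"
proof (cases "vnorm v = 0")
  case True
  then have "M *\<^sub>v v = 0\<^sub>v (dim_row M)" using v vnorm_eq_zero_iff[OF v] by auto
  then show ?thesis using True by (simp add: vnorm_def)
next
  case False
  then have pos: "0 < vnorm v" using vnorm_nonneg[of v] by simp
  define w where "w = of_real (1 / vnorm v) \<cdot>\<^sub>v v"
  have w: "w \<in> carrier_vec (dim_col M)" "vnorm w = 1"
    using v pos by (auto simp: w_def vnorm_smult norm_divide)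
  have "M *\<^sub>v w = of_real (1 / vnorm v) \<cdot>\<^sub>v (M *\<^sub>v v)"
    unfolding w_def by (rule mult_mat_vec[OF _ v]) auto
  then have "vnorm (M *\<^sub>v w) = vnorm (M *\<^sub>v v) / vnorm v"
    using pos by (simp add: vnorm_smult norm_divide)
  moreover have "vnorm (M *\<^sub>v w) \<le> snorm M"
    unfolding snorm_def by (rule cSup_upper[OF _ bdd_above_snorm_set]) (use w in auto)
  ultimately show ?thesis using pos by (simp add: divide_le_eq)
qed

lemma snorm_nonneg:
  assumes "0 < dim_col M"
  shows "0 \<le> snorm M"
proof -
  let ?e = "unit_vec (dim_col M) 0 :: complex vec"
  have "(\<Sum>i<dim_col M. (cmod (?e $ i))\<^sup>2) = (\<Sum>i<dim_col M. if i = 0 then 1 else 0)"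
    by (intro sum.cong) auto
  then have "vnorm ?e = 1"
    using assms by (simp add: vnorm_def)
  then have "vnorm (M *\<^sub>v ?e) \<le> snorm M"
    unfolding snorm_def by (intro cSup_upper[OF _ bdd_above_snorm_set]) auto
  then show ?thesis using vnorm_nonneg order.trans by blast
qed

lemma vec_diff_eq_zero_iff:
  fixes u v :: "complex vec"
  assumes "u \<in> carrier_vec m" "v \<in> carrier_vec m"
  shows "u - v = 0\<^sub>v m \<longleftrightarrow> u = v"
proof
  assume "u - v = 0\<^sub>v m"
  then have "(u - v) $ i = 0" if "i < m" for i using that by simp
  then show "u = v" using assms by (intro eq_vecI) auto
qed (use assms in simp)

lemma vnorm_adjoint_mult_vec_le:
  assumes b: "b \<in> carrier_vec (dim_row M)" and c: "0 < dim_col M"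
  shows "vnorm (mat_adjoint M *\<^sub>v b) \<le> snorm M * vnorm b"
proof -
  let ?y = "mat_adjoint M *\<^sub>v b"
  have y: "?y \<in> carrier_vec (dim_col M)" by (intro carrier_vecI) simp
  have "of_real ((vnorm ?y)\<^sup>2) = cinner b (M *\<^sub>v ?y)"
    using cinner_mat_adjoint[OF carrier_matI b y] by (simp add: cinner_self)
  then have "(vnorm ?y)\<^sup>2 = cmod (cinner b (M *\<^sub>v ?y))"
    by (metis norm_of_real abs_of_nonneg zero_le_power2)
  also have "\<dots> \<le> vnorm b * vnorm (M *\<^sub>v ?y)"
    by (rule cinner_Cauchy_Schwarz) (use b in simp)
  also have "\<dots> \<le> vnorm b * (snorm M * vnorm ?y)"
    by (rule mult_left_mono[OF snorm_mult_vec_le[OF y] vnorm_nonneg])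
  finally have le: "(vnorm ?y)\<^sup>2 \<le> (snorm M * vnorm b) * vnorm ?y"
    by (simp add: ac_simps)
  show ?thesis
  proof (cases "vnorm ?y = 0")
    case True
    then show ?thesis using snorm_nonneg[OF c] vnorm_nonneg[of b] by simp
  next
    case False
    then have "0 < vnorm ?y" using vnorm_nonneg[of ?y] by simp
    then show ?thesis using le by (simp add: power2_eq_square)
  qed
qed

section \<open>A resolvent bound for Hermitian matrices\<close>

lemma hermitian_cinner:
  assumes "hermitian H" "H \<in> carrier_mat m m" "u \<in> carrier_vec m" "v \<in> carrier_vec m"
  shows "cinner u (H *\<^sub>v v) = cinner (H *\<^sub>v u) v"
  using cinner_mat_adjoint[OF assms(2-4)] assms(1) by (simp add: hermitian_def)

lemma hermitian_shift_cinner: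
  assumes "hermitian H" "H \<in> carrier_mat m m" "u \<in> carrier_vec m" "v \<in> carrier_vec m"
    and "cnj r = r"
  shows "cinner u (H *\<^sub>v v - r \<cdot>\<^sub>v v) = cinner (H *\<^sub>v u - r \<cdot>\<^sub>v u) v"
proof -
  have "cinner u (H *\<^sub>v v - r \<cdot>\<^sub>v v) = cinner (H *\<^sub>v u) v - cnj r * cinner u v"
    using assms hermitian_cinner[OF assms(1-4)] by (simp add: cinner_diff_right cinner_smult_right)
  also have "\<dots> = cinner (H *\<^sub>v u - r \<cdot>\<^sub>v u) v"
    using assms by (simp add: cinner_diff_left cinner_smult_left)
  finally show ?thesis .
qed

lemma hermitian_eigenvalue_real:
  assumes "hermitian H" "H \<in> carrier_mat m m" "eigenvalue H r"
  shows "cnj r = r"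
proof -
  obtain e where e: "e \<in> carrier_vec m" "e \<noteq> 0\<^sub>v m" "H *\<^sub>v e = r \<cdot>\<^sub>v e"
    using assms(2,3) unfolding eigenvalue_def eigenvector_def by auto
  have "r * cinner e e = cnj r * cinner e e"
    using hermitian_cinner[OF assms(1,2) e(1) e(1)] e by (simp add: cinner_smult_right cinner_smult_left)
  moreover have "cinner e e \<noteq> 0"
    using e vnorm_eq_zero_iff[OF e(1)] by (simp add: cinner_self)
  ultimately show ?thesis by simp
qed

fun shift_prod :: "complex mat \<Rightarrow> complex list \<Rightarrow> complex vec \<Rightarrow> complex vec" where
  "shift_prod H [] v = v"
| "shift_prod H (r # rs) v = H *\<^sub>v shift_prod H rs v - r \<cdot>\<^sub>v shift_prod H rs v"

lemma shift_prod_append: "shift_prod H (xs @ ys) v = shift_prod H xs (shift_prod H ys v)"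
  by (induction xs) auto

context
  fixes H :: "complex mat" and m :: nat
  assumes H: "H \<in> carrier_mat m m"
begin

lemma shift_prod_carrier [simp]: "v \<in> carrier_vec m \<Longrightarrow> shift_prod H rs v \<in> carrier_vec m"
  by (induction rs) (use H in auto)

lemma shift_prod_diff:
  assumes "u \<in> carrier_vec m" "v \<in> carrier_vec m"
  shows "shift_prod H rs (u - v) = shift_prod H rs u - shift_prod H rs v"
proof (induction rs)
  case (Cons r rs)
  let ?u = "shift_prod H rs u" and ?v = "shift_prod H rs v"
  have uv: "?u \<in> carrier_vec m" "?v \<in> carrier_vec m" using assms by auto
  have "shift_prod H (r # rs) (u - v) = (H *\<^sub>v ?u - H *\<^sub>v ?v) - r \<cdot>\<^sub>v (?u - ?v)"
    using Cons mult_minus_distrib_mat_vec[OF H uv] by simp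
  also have "\<dots> = (H *\<^sub>v ?u - r \<cdot>\<^sub>v ?u) - (H *\<^sub>v ?v - r \<cdot>\<^sub>v ?v)"
    using uv H by (intro eq_vecI) (auto simp: right_diff_distrib simp del: index_mult_mat_vec)
  finally show ?case by simp
qed simp

lemma shift_prod_commute:
  assumes "v \<in> carrier_vec m"
  shows "shift_prod H rs (H *\<^sub>v v - s \<cdot>\<^sub>v v) = H *\<^sub>v shift_prod H rs v - s \<cdot>\<^sub>v shift_prod H rs v"
proof (induction rs)
  case (Cons r rs)
  let ?y = "shift_prod H rs v"
  have y: "?y \<in> carrier_vec m" using assms by simp
  have Hy: "H *\<^sub>v ?y \<in> carrier_vec m" using H y by simp
  have shift: "H *\<^sub>v (H *\<^sub>v ?y - c \<cdot>\<^sub>v ?y) = H *\<^sub>v (H *\<^sub>v ?y) - c \<cdot>\<^sub>v (H *\<^sub>v ?y)" for c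
    using mult_minus_distrib_mat_vec[OF H Hy smult_carrier_vec[THEN iffD2, OF y]] mult_mat_vec[OF H y]
    by simp
  have "shift_prod H (r # rs) (H *\<^sub>v v - s \<cdot>\<^sub>v v) =
      (H *\<^sub>v (H *\<^sub>v ?y) - s \<cdot>\<^sub>v (H *\<^sub>v ?y)) - r \<cdot>\<^sub>v (H *\<^sub>v ?y - s \<cdot>\<^sub>v ?y)"
    using Cons shift by simp
  also have "\<dots> = (H *\<^sub>v (H *\<^sub>v ?y) - r \<cdot>\<^sub>v (H *\<^sub>v ?y)) - s \<cdot>\<^sub>v (H *\<^sub>v ?y - r \<cdot>\<^sub>v ?y)"
    using y H by (intro eq_vecI) (auto simp: algebra_simps simp del: index_mult_mat_vec)
  also have "\<dots> = H *\<^sub>v shift_prod H (r # rs) v - s \<cdot>\<^sub>v shift_prod H (r # rs) v"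
    using shift by simp
  finally show ?case .
qed simp

lemma shift_prod_eigenvector:
  assumes e: "e \<in> carrier_vec m" and He: "H *\<^sub>v e = r \<cdot>\<^sub>v e"
  shows "shift_prod H rs e = (\<Prod>s\<leftarrow>rs. r - s) \<cdot>\<^sub>v e"
proof (induction rs)
  case (Cons s rs)
  let ?q = "\<Prod>s\<leftarrow>rs. r - s"
  have "shift_prod H (s # rs) e = ?q \<cdot>\<^sub>v (r \<cdot>\<^sub>v e) - s \<cdot>\<^sub>v (?q \<cdot>\<^sub>v e)"
    using Cons mult_mat_vec[OF H e] He by simp
  also have "\<dots> = ((r - s) * ?q) \<cdot>\<^sub>v e"
    using e by (intro eq_vecI) (auto simp: algebra_simps)
  finally show ?case by simp
qed simp

lemma shift_prod_remove:
  assumes "v \<in> carrier_vec m"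
  shows "shift_prod H (xs @ s # ys) v =
    H *\<^sub>v shift_prod H (xs @ ys) v - s \<cdot>\<^sub>v shift_prod H (xs @ ys) v"
  using shift_prod_commute[of "shift_prod H ys v" xs s] assms by (simp add: shift_prod_append)

end

context
  fixes H :: "complex mat" and m :: nat
  assumes H: "H \<in> carrier_mat m m" and herm: "hermitian H"
begin

lemma shift_prod_cinner:
  assumes "\<forall>s\<in>set rs. cnj s = s" "u \<in> carrier_vec m" "v \<in> carrier_vec m"
  shows "cinner u (shift_prod H rs v) = cinner (shift_prod H rs u) v"
  using assms
proof (induction rs arbitrary: u)
  case (Cons s rs)
  have "cinner u (shift_prod H (s # rs) v) = cinner (H *\<^sub>v u - s \<cdot>\<^sub>v u) (shift_prod H rs v)"
    using Cons.prems H by (simp add: hermitian_shift_cinner[OF herm H])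
  also have "\<dots> = cinner (shift_prod H rs (H *\<^sub>v u - s \<cdot>\<^sub>v u)) v"
    using Cons H by simp
  also have "\<dots> = cinner (shift_prod H (s # rs) u) v"
    using Cons.prems by (simp add: shift_prod_commute[OF H])
  finally show ?case .
qed simp

text \<open>For a Hermitian matrix and a real shift, \<open>ker (H - r)\<^sup>2 = ker (H - r)\<close>:
  this is what makes repeated roots of the characteristic polynomial harmless.\<close>

lemma hermitian_shift_sq_zero:
  assumes "cnj r = r" "y \<in> carrier_vec m"
    and "H *\<^sub>v (H *\<^sub>v y - r \<cdot>\<^sub>v y) - r \<cdot>\<^sub>v (H *\<^sub>v y - r \<cdot>\<^sub>v y) = 0\<^sub>v m"
  shows "H *\<^sub>v y - r \<cdot>\<^sub>v y = 0\<^sub>v m"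
proof -
  let ?k = "H *\<^sub>v y - r \<cdot>\<^sub>v y"
  have k: "?k \<in> carrier_vec m" using H assms by auto
  have "cinner ?k ?k = 0"
    using hermitian_shift_cinner[OF herm H k assms(2,1)] assms(2,3) by simp
  then show ?thesis using vnorm_eq_zero_iff[OF k] by (simp add: cinner_self)
qed

lemma hermitian_shift_not_repeated:
  assumes r: "cnj r = r" and b: "b \<in> carrier_vec m"
    and annihilated: "shift_prod H (r # rs) b = 0\<^sub>v m" and nonzero: "shift_prod H rs b \<noteq> 0\<^sub>v m"
  shows "r \<notin> set rs"
proof
  assume "r \<in> set rs"
  then obtain xs ys where rs_eq: "rs = xs @ r # ys" by (meson split_list)
  let ?z = "shift_prod H (xs @ ys) b"
  have c_eq: "shift_prod H rs b = H *\<^sub>v ?z - r \<cdot>\<^sub>v ?z"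
    using shift_prod_remove[OF H b] rs_eq by simp
  have "H *\<^sub>v ?z - r \<cdot>\<^sub>v ?z = 0\<^sub>v m"
    by (rule hermitian_shift_sq_zero[OF r]) (use b H annihilated c_eq in simp_all)
  with nonzero c_eq show False by simp
qed

lemma hermitian_shift_prod_split:
  assumes r: "cnj r = r" and rs: "\<forall>s\<in>set rs. cnj s = s" and b: "b \<in> carrier_vec m"
    and annihilated: "shift_prod H (r # rs) b = 0\<^sub>v m"
  obtains e w where "e \<in> carrier_vec m" "w \<in> carrier_vec m" "b = e + w" "H *\<^sub>v e = r \<cdot>\<^sub>v e"
    "shift_prod H rs w = 0\<^sub>v m" "cinner e w = 0"
proof (cases "shift_prod H rs b = 0\<^sub>v m")
  case True
  show ?thesis by (rule that[of "0\<^sub>v m" b]) (use b True H in auto)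
next
  case False
  let ?c = "shift_prod H rs b"
  have c: "?c \<in> carrier_vec m" using b H by simp
  have Hc: "H *\<^sub>v ?c = r \<cdot>\<^sub>v ?c"
    using annihilated c H vec_diff_eq_zero_iff[of "H *\<^sub>v ?c" m "r \<cdot>\<^sub>v ?c"] by simp
  define q where "q = (\<Prod>s\<leftarrow>rs. r - s)"
  have q: "q \<noteq> 0"
    using hermitian_shift_not_repeated[OF r b annihilated False] unfolding q_def
    by (induction rs) auto
  define e where "e = (1 / q) \<cdot>\<^sub>v ?c"
  have e: "e \<in> carrier_vec m" using c by (simp add: e_def)
  have He: "H *\<^sub>v e = r \<cdot>\<^sub>v e"
    using Hc c H by (simp add: e_def mult_mat_vec smult_smult_assoc mult.commute)
  have pe: "shift_prod H rs e = ?c"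
    using shift_prod_eigenvector[OF H e He, of rs] q c
    by (simp add: e_def q_def[symmetric] smult_smult_assoc)
  have pw: "shift_prod H rs (b - e) = 0\<^sub>v m"
    using shift_prod_diff[OF H b e] pe c by simp
  have "cnj q * cinner e (b - e) = cinner (shift_prod H rs e) (b - e)"
    using shift_prod_eigenvector[OF H e He, of rs] e b by (simp add: q_def cinner_smult_left)
  also have "\<dots> = 0"
    using shift_prod_cinner[OF rs e, of "b - e"] pw e b by simp
  finally have "cinner e (b - e) = 0" using q by simp
  then show ?thesis
    by (intro that[of e "b - e"]) (use e b He pw in auto)
qed

lemma resolvent_norm_sq_eigen_split:
  assumes e: "e \<in> carrier_vec m" and w: "w \<in> carrier_vec m" and He: "H *\<^sub>v e = r \<cdot>\<^sub>v e"
    and ew: "cinner e w = 0"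
  shows "(vnorm (\<mu> \<cdot>\<^sub>v (e + w) - H *\<^sub>v (e + w)))\<^sup>2 =
    (cmod (\<mu> - r) * vnorm e)\<^sup>2 + (vnorm (\<mu> \<cdot>\<^sub>v w - H *\<^sub>v w))\<^sup>2"
proof -
  let ?g = "\<mu> \<cdot>\<^sub>v w - H *\<^sub>v w"
  have g: "?g \<in> carrier_vec m" using w H by simp
  have res: "\<mu> \<cdot>\<^sub>v (e + w) - H *\<^sub>v (e + w) = (\<mu> - r) \<cdot>\<^sub>v e + ?g"
    using e w H He
    by (auto simp: mult_add_distrib_mat_vec algebra_simps simp del: index_mult_mat_vec
        intro!: eq_vecI)
  have "cinner e ?g = \<mu> * cinner e w - cinner (r \<cdot>\<^sub>v e) w"
    using e w H He hermitian_cinner[OF herm H e w] by (simp add: cinner_diff_right cinner_smult_right)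
  then have "cinner e ?g = 0"
    using e w ew by (simp add: cinner_smult_left)
  then have "cinner ((\<mu> - r) \<cdot>\<^sub>v e) ?g = 0"
    using e g H cinner_smult_left[of e ?g "\<mu> - r"] by simp
  then show ?thesis
    unfolding res using vnorm_add_sq_orthogonal[of "(\<mu> - r) \<cdot>\<^sub>v e" ?g] e g H
    by (simp add: vnorm_smult)
qed

lemma hermitian_resolvent_shift_prod:
  assumes gap: "\<And>\<nu>. eigenvalue H \<nu> \<Longrightarrow> d \<le> cmod (\<mu> - \<nu>)" and d: "0 \<le> d"
  shows "\<forall>s\<in>set rs. cnj s = s \<Longrightarrow> b \<in> carrier_vec m \<Longrightarrow> shift_prod H rs b = 0\<^sub>v m \<Longrightarrow>
    (d * vnorm b)\<^sup>2 \<le> (vnorm (\<mu> \<cdot>\<^sub>v b - H *\<^sub>v b))\<^sup>2"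
proof (induction rs arbitrary: b)
  case Nil
  then show ?case by (simp add: vnorm_def)
next
  case (Cons r rs)
  obtain e w where e: "e \<in> carrier_vec m" and w: "w \<in> carrier_vec m" and b: "b = e + w"
    and He: "H *\<^sub>v e = r \<cdot>\<^sub>v e" and pw: "shift_prod H rs w = 0\<^sub>v m" and ew: "cinner e w = 0"
    using hermitian_shift_prod_split[of r rs b] Cons.prems by auto
  have "d * vnorm e \<le> cmod (\<mu> - r) * vnorm e"
  proof (cases "e = 0\<^sub>v m")
    case False
    then have "eigenvalue H r"
      using e He H unfolding eigenvalue_def eigenvector_def by auto
    then show ?thesis by (intro mult_right_mono gap vnorm_nonneg)
  qed (simp add: vnorm_def)
  then have "(d * vnorm e)\<^sup>2 \<le> (cmod (\<mu> - r) * vnorm e)\<^sup>2"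
    using d vnorm_nonneg[of e] by (intro power_mono) auto
  moreover have "(d * vnorm w)\<^sup>2 \<le> (vnorm (\<mu> \<cdot>\<^sub>v w - H *\<^sub>v w))\<^sup>2"
    using Cons w pw by simp
  moreover have "(vnorm b)\<^sup>2 = (vnorm e)\<^sup>2 + (vnorm w)\<^sup>2"
    unfolding b using vnorm_add_sq_orthogonal[of e w] e w ew by simp
  ultimately show ?case
    unfolding resolvent_norm_sq_eigen_split[OF e w He ew, of \<mu>, folded b]
    by (simp add: power_mult_distrib distrib_left)
qed

end

lemma upper_triangular_shift_prod_diag:
  fixes B :: "complex mat"
  assumes B: "B \<in> carrier_mat m m" and ut: "upper_triangular B"
  shows "j \<le> m \<Longrightarrow> v \<in> carrier_vec m \<Longrightarrow> (\<forall>i. j \<le> i \<longrightarrow> i < m \<longrightarrow> v $ i = 0) \<Longrightarrow>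
    shift_prod B (take j (diag_mat B)) v = 0\<^sub>v m"
proof (induction j arbitrary: v)
  case 0
  then show ?case by (intro eq_vecI) auto
next
  case (Suc j)
  let ?w = "B *\<^sub>v v - B $$ (j,j) \<cdot>\<^sub>v v"
  have j: "j < m" using Suc by simp
  have "?w $ i = 0" if ji: "j \<le> i" and im: "i < m" for i
  proof -
    have "B $$ (i,l) * v $ l = (if l = i then B $$ (i,i) * v $ i else 0)" if "l < m" for l
      using ut B ji im that Suc.prems(3)[rule_format, of l]
      by (cases "l < i") (auto simp: upper_triangular_def)
    then have "(B *\<^sub>v v) $ i = (\<Sum>l<m. if l = i then B $$ (i,i) * v $ i else 0)"
      unfolding index_mult_mat_vec_sum[OF B Suc.prems(2) im] by (intro sum.cong) auto
    moreover have "i = j \<or> v $ i = 0"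
      using Suc.prems(3)[rule_format, of i] ji im by (cases "i = j") auto
    ultimately show ?thesis using im Suc.prems(2) B by auto
  qed
  then have "shift_prod B (take j (diag_mat B)) ?w = 0\<^sub>v m"
    using Suc.IH[of ?w] Suc.prems B j by auto
  moreover have "take (Suc j) (diag_mat B) = take j (diag_mat B) @ [B $$ (j,j)]"
    using j B by (simp add: take_Suc_conv_app_nth diag_mat_def)
  ultimately show ?case by (simp add: shift_prod_append)
qed

lemma similar_shift_prod:
  fixes H B P Q :: "complex mat"
  assumes sim: "similar_mat_wit H B P Q" and H: "H \<in> carrier_mat m m" and v: "v \<in> carrier_vec m"
  shows "shift_prod H rs v = P *\<^sub>v shift_prod B rs (Q *\<^sub>v v)"
proof -
  from similar_mat_witD2[OF H sim] have B: "B \<in> carrier_mat m m" and P: "P \<in> carrier_mat m m"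
    and Q: "Q \<in> carrier_mat m m" and QP: "Q * P = 1\<^sub>m m" and PQ: "P * Q = 1\<^sub>m m"
    and HPBQ: "H = P * B * Q" by auto
  have HP: "H * P = P * B"
    using P B Q QP by (simp add: HPBQ assoc_mult_mat[of _ m m _ m _ m])
  show ?thesis
  proof (induction rs)
    case Nil
    show ?case using P Q v PQ by (simp flip: assoc_mult_mat_vec)
  next
    case (Cons r rs)
    let ?y = "shift_prod B rs (Q *\<^sub>v v)"
    have y: "?y \<in> carrier_vec m" using shift_prod_carrier[OF B] Q v by simp
    have "H *\<^sub>v (P *\<^sub>v ?y) = P *\<^sub>v (B *\<^sub>v ?y)"
      using H P B y HP by (metis assoc_mult_mat_vec)
    with Cons show ?case
      using P B y by (simp add: mult_minus_distrib_mat_vec mult_mat_vec)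
  qed
qed

lemma annihilating_eigenvalue_shifts:
  fixes H :: "complex mat"
  assumes H: "H \<in> carrier_mat m m"
  obtains rs where "\<forall>r\<in>set rs. eigenvalue H r" "\<forall>b\<in>carrier_vec m. shift_prod H rs b = 0\<^sub>v m"
proof -
  obtain es where es: "char_poly H = (\<Prod>e\<leftarrow>es. [:- e, 1:])"
    using char_poly_factorized[OF H] by blast
  obtain B P Q where sd: "schur_decomposition H es = (B, P, Q)"
    by (cases "schur_decomposition H es") auto
  from schur_decomposition[OF H es sd] have sim: "similar_mat_wit H B P Q"
    and ut: "upper_triangular B" and diag: "diag_mat B = es" by auto
  from similar_mat_witD2[OF H sim] have B: "B \<in> carrier_mat m m" and Q: "Q \<in> carrier_mat m m"
    and P: "P \<in> carrier_mat m m" by auto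
  show ?thesis
  proof (rule that[of es])
    show "\<forall>r\<in>set es. eigenvalue H r"
      using es by (auto simp: eigenvalue_root_char_poly[OF H] poly_prod_list prod_list_zero_iff)
    show "\<forall>b\<in>carrier_vec m. shift_prod H es b = 0\<^sub>v m"
    proof
      fix b :: "complex vec" assume b: "b \<in> carrier_vec m"
      have "shift_prod B es (Q *\<^sub>v b) = 0\<^sub>v m"
        using upper_triangular_shift_prod_diag[OF B ut, of m "Q *\<^sub>v b"] Q b B diag
        by (simp add: diag_mat_def)
      moreover have "P *\<^sub>v 0\<^sub>v m = 0\<^sub>v m"
        using P by (intro eq_vecI) (auto simp: scalar_prod_def)
      ultimately show "shift_prod H es b = 0\<^sub>v m"
        using similar_shift_prod[OF sim H b, of es] by simp
    qed
  qed
qed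

lemma hermitian_resolvent_lower_bound:
  fixes H :: "complex mat"
  assumes H: "H \<in> carrier_mat m m" and herm: "hermitian H" and d: "0 \<le> d"
    and gap: "\<And>\<nu>. eigenvalue H \<nu> \<Longrightarrow> d \<le> cmod (\<mu> - \<nu>)" and b: "b \<in> carrier_vec m"
  shows "d * vnorm b \<le> vnorm (\<mu> \<cdot>\<^sub>v b - H *\<^sub>v b)"
proof -
  obtain rs where rs: "\<forall>r\<in>set rs. eigenvalue H r" "\<forall>b\<in>carrier_vec m. shift_prod H rs b = 0\<^sub>v m"
    using annihilating_eigenvalue_shifts[OF H] by blast
  have "\<forall>r\<in>set rs. cnj r = r"
    using rs(1) hermitian_eigenvalue_real[OF herm H] by blast
  then have "(d * vnorm b)\<^sup>2 \<le> (vnorm (\<mu> \<cdot>\<^sub>v b - H *\<^sub>v b))\<^sup>2"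
    using hermitian_resolvent_shift_prod[OF H herm gap d] rs(2) b by blast
  then show ?thesis using vnorm_nonneg by (rule power2_le_imp_le)
qed

lemma dist_spec_nonneg: "0 \<le> dist_spec \<mu> M"
  unfolding dist_spec_def by (intro Inf_greatest) auto

lemma dist_spec_resolvent_lower_bound:
  fixes H :: "complex mat"
  assumes H: "H \<in> carrier_mat m m" and herm: "hermitian H" and b: "b \<in> carrier_vec m"
  shows "dist_spec \<mu> H * ereal (vnorm b) \<le> ereal (vnorm (\<mu> \<cdot>\<^sub>v b - H *\<^sub>v b))"
proof (cases "m = 0")
  case True
  \<comment> \<open>Then \<open>H\<close> has no eigenvalues, so \<open>dist_spec \<mu> H = \<infinity>\<close>; the bound holds as \<open>\<infinity> * 0 = 0\<close>.\<close>
  then have "ereal (vnorm b) = 0" using b by (simp add: vnorm_def zero_ereal_def)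
  then show ?thesis by (simp add: vnorm_nonneg zero_ereal_def[symmetric])
next
  case False
  then obtain \<nu>\<^sub>0 where "eigenvalue H \<nu>\<^sub>0"
    using spectrum_non_empty[OF H] by (auto simp: spectrum_def)
  then have "dist_spec \<mu> H \<le> ereal (cmod (\<mu> - \<nu>\<^sub>0))"
    unfolding dist_spec_def by (intro Inf_lower) auto
  then obtain d where d: "dist_spec \<mu> H = ereal d" "0 \<le> d"
    using dist_spec_nonneg[of \<mu> H] by (cases "dist_spec \<mu> H") auto
  have "d \<le> cmod (\<mu> - \<nu>)" if "eigenvalue H \<nu>" for \<nu>
  proof -
    have "dist_spec \<mu> H \<le> ereal (cmod (\<mu> - \<nu>))"
      unfolding dist_spec_def using that by (intro Inf_lower) auto
    then show ?thesis using d by simp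
  qed
  then show ?thesis
    using hermitian_resolvent_lower_bound[OF H herm d(2) _ b] d(1) by simp
qed

section \<open>Block rows of an eigenvector equation\<close>

lemma sum_lessThan_add: "(\<Sum>l<k + p. f l) = (\<Sum>l<k. f l) + (\<Sum>l<p. f (k + l :: nat))"
  by (induction p) (auto simp: add.assoc)

lemma hcat_mult_adjoint:
  assumes Q: "Q \<in> carrier_mat n k" and P: "P \<in> carrier_mat n p"
  shows "hcat Q P * mat_adjoint (hcat Q P) = Q * mat_adjoint Q + P * mat_adjoint P"
proof (rule eq_matI)
  let ?U = "hcat Q P"
  have U: "?U \<in> carrier_mat n (k + p)" using Q P by (simp add: hcat_def)
  fix i j assume "i < dim_row (Q * mat_adjoint Q + P * mat_adjoint P)"
    "j < dim_col (Q * mat_adjoint Q + P * mat_adjoint P)"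
  then have i: "i < n" and j: "j < n" using Q P by auto
  have "(?U * mat_adjoint ?U) $$ (i,j) = (\<Sum>l<k + p. ?U $$ (i,l) * cnj (?U $$ (j,l)))"
    using i j U by (simp add: scalar_prod_def atLeast0LessThan)
  also have "\<dots> = (\<Sum>l<k. Q $$ (i,l) * cnj (Q $$ (j,l))) + (\<Sum>l<p. P $$ (i,l) * cnj (P $$ (j,l)))"
    using i j Q P by (simp add: sum_lessThan_add hcat_def)
  also have "\<dots> = (Q * mat_adjoint Q + P * mat_adjoint P) $$ (i,j)"
    using i j Q P by (simp add: scalar_prod_def atLeast0LessThan)
  finally show "(?U * mat_adjoint ?U) $$ (i,j) = (Q * mat_adjoint Q + P * mat_adjoint P) $$ (i,j)" .
qed (use Q P in \<open>auto simp: hcat_def\<close>)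

lemma mat_adjoint_sandwich:
  assumes A: "A \<in> carrier_mat n n" "hermitian A"
    and V: "V \<in> carrier_mat n k" and W: "W \<in> carrier_mat n p"
  shows "mat_adjoint (mat_adjoint W * A * V) = mat_adjoint V * A * W"
proof -
  have WH: "mat_adjoint W \<in> carrier_mat p n" using W by (rule mat_adjoint_carrier)
  have "mat_adjoint (mat_adjoint W * A * V) = mat_adjoint V * mat_adjoint (mat_adjoint W * A)"
    using WH A V by (intro mat_adjoint_mult) auto
  also have "mat_adjoint (mat_adjoint W * A) = A * W"
    using mat_adjoint_mult[OF WH A(1)] A by (simp add: hermitian_def)
  finally show ?thesis
    using A V W by (simp add: assoc_mult_mat[of _ k n _ n _ p] mat_adjoint_carrier)
qed

lemma mult3_mat_vec:
  assumes "M\<^sub>1 \<in> carrier_mat r\<^sub>1 r\<^sub>2" "M\<^sub>2 \<in> carrier_mat r\<^sub>2 r\<^sub>3" "M\<^sub>3 \<in> carrier_mat r\<^sub>3 r\<^sub>4"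
    and "v \<in> carrier_vec r\<^sub>4"
  shows "(M\<^sub>1 * M\<^sub>2 * M\<^sub>3) *\<^sub>v v = M\<^sub>1 *\<^sub>v (M\<^sub>2 *\<^sub>v (M\<^sub>3 *\<^sub>v v))"
  using assoc_mult_mat_vec[OF mult_carrier_mat[OF assms(1,2)] assms(3,4)]
    assoc_mult_mat_vec[OF assms(1,2) mult_mat_vec_carrier[OF assms(3,4)]] by simp

context
  fixes V W :: "complex mat" and n k p :: nat
  assumes V: "V \<in> carrier_mat n k" and W: "W \<in> carrier_mat n p"
    and resolution: "V * mat_adjoint V + W * mat_adjoint W = 1\<^sub>m n"
begin

lemma resolution_mult_vec:
  assumes x: "x \<in> carrier_vec n"
  shows "x = V *\<^sub>v (mat_adjoint V *\<^sub>v x) + W *\<^sub>v (mat_adjoint W *\<^sub>v x)"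
proof -
  have VV: "V * mat_adjoint V \<in> carrier_mat n n" and WW: "W * mat_adjoint W \<in> carrier_mat n n"
    using V W mat_adjoint_carrier by auto
  have "x = (V * mat_adjoint V + W * mat_adjoint W) *\<^sub>v x" using resolution x by simp
  also have "\<dots> = (V * mat_adjoint V) *\<^sub>v x + (W * mat_adjoint W) *\<^sub>v x"
    by (rule add_mult_distrib_mat_vec[OF VV WW x])
  also have "\<dots> = V *\<^sub>v (mat_adjoint V *\<^sub>v x) + W *\<^sub>v (mat_adjoint W *\<^sub>v x)"
    using V W x mat_adjoint_carrier[OF V] mat_adjoint_carrier[OF W] by simp
  finally show ?thesis .
qed

lemma vnorm_sq_resolution:
  assumes x: "x \<in> carrier_vec n"
  shows "(vnorm x)\<^sup>2 = (vnorm (mat_adjoint V *\<^sub>v x))\<^sup>2 + (vnorm (mat_adjoint W *\<^sub>v x))\<^sup>2"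
proof -
  define a b where "a = mat_adjoint V *\<^sub>v x" and "b = mat_adjoint W *\<^sub>v x"
  have a: "a \<in> carrier_vec k" and b: "b \<in> carrier_vec p"
    using mult_mat_vec_carrier[OF mat_adjoint_carrier[OF V] x]
      mult_mat_vec_carrier[OF mat_adjoint_carrier[OF W] x] by (simp_all add: a_def b_def)
  have x_eq: "x = V *\<^sub>v a + W *\<^sub>v b"
    unfolding a_def b_def by (rule resolution_mult_vec[OF x])
  have "of_real ((vnorm x)\<^sup>2) = cinner x (V *\<^sub>v a + W *\<^sub>v b)"
    using arg_cong[OF x_eq, of "cinner x"] by (simp add: cinner_self)
  also have "\<dots> = cinner x (V *\<^sub>v a) + cinner x (W *\<^sub>v b)"
    using V W by (simp add: cinner_add_right)
  also have "\<dots> = cinner a a + cinner b b"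
    using cinner_mat_adjoint[OF V x a] cinner_mat_adjoint[OF W x b] by (simp add: a_def b_def)
  also have "\<dots> = of_real ((vnorm a)\<^sup>2 + (vnorm b)\<^sup>2)"
    by (simp add: cinner_self)
  finally show ?thesis by (simp only: of_real_eq_iff a_def b_def)
qed

lemma eigen_block_row:
  assumes A: "A \<in> carrier_mat n n" and x: "x \<in> carrier_vec n" and eig: "A *\<^sub>v x = lam \<cdot>\<^sub>v x"
  shows "lam \<cdot>\<^sub>v (mat_adjoint W *\<^sub>v x) - (mat_adjoint W * A * W) *\<^sub>v (mat_adjoint W *\<^sub>v x) =
    (mat_adjoint W * A * V) *\<^sub>v (mat_adjoint V *\<^sub>v x)"
proof -
  define a b where "a = mat_adjoint V *\<^sub>v x" and "b = mat_adjoint W *\<^sub>v x"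
  have WH: "mat_adjoint W \<in> carrier_mat p n" using W by (rule mat_adjoint_carrier)
  have a: "a \<in> carrier_vec k" and b: "b \<in> carrier_vec p"
    using mult_mat_vec_carrier[OF mat_adjoint_carrier[OF V] x]
      mult_mat_vec_carrier[OF mat_adjoint_carrier[OF W] x] by (simp_all add: a_def b_def)
  have x_eq: "x = V *\<^sub>v a + W *\<^sub>v b"
    unfolding a_def b_def by (rule resolution_mult_vec[OF x])
  have "lam \<cdot>\<^sub>v b = mat_adjoint W *\<^sub>v (A *\<^sub>v x)"
    using eig WH x by (simp add: b_def mult_mat_vec)
  also have "A *\<^sub>v x = A *\<^sub>v (V *\<^sub>v a) + A *\<^sub>v (W *\<^sub>v b)"
    using mult_add_distrib_mat_vec[OF A, of "V *\<^sub>v a" "W *\<^sub>v b"] V W a b x_eq by simp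
  also have "mat_adjoint W *\<^sub>v \<dots> =
      mat_adjoint W *\<^sub>v (A *\<^sub>v (V *\<^sub>v a)) + mat_adjoint W *\<^sub>v (A *\<^sub>v (W *\<^sub>v b))"
    using A V W a b by (intro mult_add_distrib_mat_vec[OF WH]) auto
  also have "\<dots> = (mat_adjoint W * A * V) *\<^sub>v a + (mat_adjoint W * A * W) *\<^sub>v b"
    using mult3_mat_vec[OF WH A V a] mult3_mat_vec[OF WH A W b] by simp
  finally have "lam \<cdot>\<^sub>v b = (mat_adjoint W * A * V) *\<^sub>v a + (mat_adjoint W * A * W) *\<^sub>v b" .
  then show ?thesis
    using A V W WH a b unfolding a_def[symmetric] b_def[symmetric]
    by (auto simp del: index_mult_mat_vec intro!: eq_vecI)
qed

end

section \<open>Ritz vectors\<close>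

lemma ritz_coordinate_bound:
  fixes a b :: "complex vec" and R :: "complex mat" and lh :: "nat \<Rightarrow> real"
  assumes a: "a \<in> carrier_vec k" and b: "b \<in> carrier_vec p" and R: "R \<in> carrier_mat p k"
    and k: "1 < k" and unit: "(vnorm a)\<^sup>2 + (vnorm b)\<^sup>2 = 1"
    and row: "\<And>i. i < k \<Longrightarrow> (lam - of_real (lh i)) * a $ i = (mat_adjoint R *\<^sub>v b) $ i"
    and \<gamma>: "0 < \<gamma>" and gap: "\<And>i. i \<in> {1..<k} \<Longrightarrow> \<gamma> \<le> cmod (lam - of_real (lh i))"
  shows "1 - (cmod (a $ 0))\<^sup>2 \<le>
    (vnorm b)\<^sup>2 * (1 + (snorm (mat p (k - 1) (\<lambda>(i,j). R $$ (i, j + 1))))\<^sup>2 / \<gamma>\<^sup>2)"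
proof -
  define R\<^sub>2 where "R\<^sub>2 = mat p (k - 1) (\<lambda>(i,j). R $$ (i, j + 1))"
  have R\<^sub>2: "R\<^sub>2 \<in> carrier_mat p (k - 1)" by (simp add: R\<^sub>2_def)
  have "\<gamma> * cmod (a $ Suc j) \<le> cmod ((mat_adjoint R\<^sub>2 *\<^sub>v b) $ j)" if j: "j < k - 1" for j
  proof -
    have "(mat_adjoint R\<^sub>2 *\<^sub>v b) $ j = (mat_adjoint R *\<^sub>v b) $ Suc j"
      using j R R\<^sub>2 b mat_adjoint_carrier[OF R] mat_adjoint_carrier[OF R\<^sub>2]
      by (simp add: index_mult_mat_vec_sum[of _ "k - 1" p] index_mult_mat_vec_sum[of _ k p]
          R\<^sub>2_def del: index_mult_mat_vec)
    also have "\<dots> = (lam - of_real (lh (Suc j))) * a $ Suc j" using row[of "Suc j"] j by simp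
    finally show ?thesis
      using gap[of "Suc j"] j by (simp add: norm_mult mult_right_mono)
  qed
  then have "\<gamma>\<^sup>2 * (\<Sum>j<k - 1. (cmod (a $ Suc j))\<^sup>2) \<le> (\<Sum>j<k - 1. (cmod ((mat_adjoint R\<^sub>2 *\<^sub>v b) $ j))\<^sup>2)"
    unfolding sum_distrib_left power_mult_distrib[symmetric]
    by (intro sum_mono power_mono) (use \<gamma> in auto)
  also have "\<dots> = (vnorm (mat_adjoint R\<^sub>2 *\<^sub>v b))\<^sup>2"
    using R\<^sub>2 by (simp add: vnorm_sq)
  also have "\<dots> \<le> (snorm R\<^sub>2 * vnorm b)\<^sup>2"
    using b R\<^sub>2 k by (intro power_mono vnorm_adjoint_mult_vec_le vnorm_nonneg) auto
  finally have tail: "(\<Sum>j<k - 1. (cmod (a $ Suc j))\<^sup>2) \<le> (vnorm b)\<^sup>2 * ((snorm R\<^sub>2)\<^sup>2 / \<gamma>\<^sup>2)"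
    using \<gamma> by (simp add: field_simps power_mult_distrib)
  have "(vnorm a)\<^sup>2 = (cmod (a $ 0))\<^sup>2 + (\<Sum>j<k - 1. (cmod (a $ Suc j))\<^sup>2)"
    using a k sum.lessThan_Suc_shift[of "\<lambda>i. (cmod (a $ i))\<^sup>2" "k - 1"] by (simp add: vnorm_sq)
  with unit tail show ?thesis
    unfolding R\<^sub>2_def by (simp add: algebra_simps)
qed

lemma sin_vangle:
  "cmod (cinner xh x) \<le> 1 \<Longrightarrow> sin (vangle x xh) = sqrt (1 - (cmod (cinner xh x))\<^sup>2)"
  unfolding vangle_def using norm_ge_zero[of "cinner xh x"] by (intro sin_arccos) linarith+

lemma cinner_col_eq_adjoint_index:
  assumes "M \<in> carrier_mat r c" "j < c" "x \<in> carrier_vec r"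
  shows "cinner (col M j) x = (mat_adjoint M *\<^sub>v x) $ j"
  using assms mat_adjoint_carrier[OF assms(1)]
  by (simp add: cinner_def index_mult_mat_vec_sum[of _ c r] del: index_mult_mat_vec)

lemma diagm_carrier: "diagm m d \<in> carrier_mat m m"
  by (simp add: diagm_def)

lemma index_diagm_mult_vec:
  assumes "v \<in> carrier_vec m" "i < m"
  shows "(diagm m d *\<^sub>v v) $ i = of_real (d i) * v $ i"
proof -
  have "(diagm m d *\<^sub>v v) $ i = (\<Sum>j<m. diagm m d $$ (i,j) * v $ j)"
    by (rule index_mult_mat_vec_sum) (use assms in \<open>auto simp: diagm_def\<close>)
  also have "\<dots> = (\<Sum>j<m. if j = i then of_real (d i) * v $ i else 0)"
    using assms by (intro sum.cong) (auto simp: diagm_def)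
  finally show ?thesis using assms(2) by simp
qed

context
  fixes A V W :: "complex mat" and n k p :: nat and x :: "complex vec" and lam :: complex
  assumes A: "A \<in> carrier_mat n n" "hermitian A"
    and V: "V \<in> carrier_mat n k" and W: "W \<in> carrier_mat n p" and k: "0 < k"
    and resolution: "V * mat_adjoint V + W * mat_adjoint W = 1\<^sub>m n"
    and x: "x \<in> carrier_vec n" "vnorm x = 1" and eig: "A *\<^sub>v x = lam \<cdot>\<^sub>v x"
begin

lemma ritz_coordinates_carrier:
  "mat_adjoint V *\<^sub>v x \<in> carrier_vec k" "mat_adjoint W *\<^sub>v x \<in> carrier_vec p"
  by (rule mult_mat_vec_carrier[OF mat_adjoint_carrier[OF V] x(1)],
      rule mult_mat_vec_carrier[OF mat_adjoint_carrier[OF W] x(1)])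

lemma ritz_coordinates_unit: "(vnorm (mat_adjoint V *\<^sub>v x))\<^sup>2 + (vnorm (mat_adjoint W *\<^sub>v x))\<^sup>2 = 1"
  using vnorm_sq_resolution[OF V W resolution x(1)] x(2) by simp

lemma ritz_coordinates_le_one: "vnorm (mat_adjoint V *\<^sub>v x) \<le> 1"
proof -
  have "(vnorm (mat_adjoint V *\<^sub>v x))\<^sup>2 \<le> 1"
    using ritz_coordinates_unit zero_le_power2[of "vnorm (mat_adjoint W *\<^sub>v x)"] by linarith
  then show ?thesis using power2_le_imp_le[of "vnorm (mat_adjoint V *\<^sub>v x)" 1] by simp
qed

lemma ritz_residual_gap_bound:
  "dist_spec lam (mat_adjoint W * A * W) * ereal (vnorm (mat_adjoint W *\<^sub>v x)) \<le>
    ereal (snorm (mat_adjoint W * A * V))"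
proof -
  let ?a = "mat_adjoint V *\<^sub>v x" and ?b = "mat_adjoint W *\<^sub>v x"
  let ?R = "mat_adjoint W * A * V" and ?A\<^sub>3 = "mat_adjoint W * A * W"
  have WH: "mat_adjoint W \<in> carrier_mat p n" using W by (rule mat_adjoint_carrier)
  have A\<^sub>3: "?A\<^sub>3 \<in> carrier_mat p p" using WH A W by auto
  have "hermitian ?A\<^sub>3"
    using mat_adjoint_sandwich[OF A W W] A\<^sub>3 carrier_matD[OF W] by (simp add: hermitian_def)
  have "vnorm (lam \<cdot>\<^sub>v ?b - ?A\<^sub>3 *\<^sub>v ?b) = vnorm (?R *\<^sub>v ?a)"
    using eigen_block_row[OF V W resolution A(1) x(1) eig] by simp
  also have "\<dots> \<le> snorm ?R * vnorm ?a"
    using ritz_coordinates_carrier(1) V by (intro snorm_mult_vec_le) simp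
  also have "\<dots> \<le> snorm ?R"
    using ritz_coordinates_le_one snorm_nonneg[of ?R] V k vnorm_nonneg[of ?a]
    by (simp add: mult_left_le)
  finally show ?thesis
    using dist_spec_resolvent_lower_bound[OF A\<^sub>3 \<open>hermitian ?A\<^sub>3\<close> ritz_coordinates_carrier(2), of lam]
    by (meson ereal_less_eq(3) order_trans)
qed

lemma ritz_vector_sin_bound:
  assumes k1: "1 < k" and diag: "mat_adjoint V * A * V = diagm k lh"
    and \<gamma>: "0 < \<gamma>" and gap: "\<And>i. i \<in> {1..<k} \<Longrightarrow> \<gamma> \<le> cmod (lam - of_real (lh i))"
  shows "sin (vangle x (col V 0)) \<le> vnorm (mat_adjoint W *\<^sub>v x) *
    sqrt (1 + (snorm (mat p (k - 1) (\<lambda>(i,j). (mat_adjoint W * A * V) $$ (i, j + 1))))\<^sup>2 / \<gamma>\<^sup>2)"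
    (is "_ \<le> _ * sqrt ?C")
proof -
  let ?a = "mat_adjoint V *\<^sub>v x" and ?b = "mat_adjoint W *\<^sub>v x" and ?R = "mat_adjoint W * A * V"
  note a = ritz_coordinates_carrier(1) and b = ritz_coordinates_carrier(2)
  have R: "?R \<in> carrier_mat p k" using A V W mat_adjoint_carrier[OF W] by auto
  \<comment> \<open>The second block row is the first one with the roles of \<open>V\<close> and \<open>W\<close> exchanged.\<close>
  have block: "lam \<cdot>\<^sub>v ?a - diagm k lh *\<^sub>v ?a = mat_adjoint ?R *\<^sub>v ?b"
    using eigen_block_row[OF W V _ A(1) x(1) eig] resolution diag mat_adjoint_sandwich[OF A V W]
      comm_add_mat[of "V * mat_adjoint V" n n "W * mat_adjoint W"] V W mat_adjoint_carrier
    by fastforce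
  have row: "(lam - of_real (lh i)) * ?a $ i = (mat_adjoint ?R *\<^sub>v ?b) $ i" if "i < k" for i
  proof -
    have "(lam \<cdot>\<^sub>v ?a - diagm k lh *\<^sub>v ?a) $ i = (mat_adjoint ?R *\<^sub>v ?b) $ i"
      by (simp only: block)
    then show ?thesis
      using that carrier_vecD[OF a] diagm_carrier[of k lh] index_diagm_mult_vec[OF a that]
      by (simp add: algebra_simps del: index_mult_mat_vec)
  qed
  have "1 - (cmod (?a $ 0))\<^sup>2 \<le> (vnorm ?b)\<^sup>2 * ?C"
    using ritz_coordinate_bound[OF a b R k1 ritz_coordinates_unit row \<gamma> gap] by simp
  also have "\<dots> = (vnorm ?b * sqrt ?C)\<^sup>2"
    by (simp add: power_mult_distrib add_pos_nonneg)
  finally have bound: "sqrt (1 - (cmod (?a $ 0))\<^sup>2) \<le> vnorm ?b * sqrt ?C"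
    using vnorm_nonneg[of ?b] by (simp add: real_le_lsqrt real_sqrt_le_iff)
  have a0: "cinner (col V 0) x = ?a $ 0"
    using cinner_col_eq_adjoint_index[OF V _ x(1)] k by simp
  have "cmod (?a $ 0) \<le> vnorm ?a"
    by (rule norm_index_le_vnorm) (use carrier_vecD[OF a] k in simp)
  then have "cmod (?a $ 0) \<le> 1"
    using ritz_coordinates_le_one by (rule order_trans)
  then show ?thesis
    using bound by (simp add: sin_vangle a0)
qed

end

lemma unitary_rotation_mult_adjoint:
  assumes Q: "Q \<in> carrier_mat n k" and \<Omega>: "\<Omega> \<in> carrier_mat k k" "unitary \<Omega>"
  shows "(Q * \<Omega>) * mat_adjoint (Q * \<Omega>) = Q * mat_adjoint Q"
proof -
  have QH: "mat_adjoint Q \<in> carrier_mat k n" and \<Omega>H: "mat_adjoint \<Omega> \<in> carrier_mat k k"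
    using Q \<Omega> by (auto simp: mat_adjoint_carrier)
  have "(Q * \<Omega>) * mat_adjoint (Q * \<Omega>) = Q * (\<Omega> * (mat_adjoint \<Omega> * mat_adjoint Q))"
    by (simp only: mat_adjoint_mult[OF Q \<Omega>(1)] assoc_mult_mat[OF Q \<Omega>(1) mult_carrier_mat[OF \<Omega>H QH]])
  also have "\<Omega> * (mat_adjoint \<Omega> * mat_adjoint Q) = mat_adjoint Q"
    using \<Omega> by (simp add: assoc_mult_mat[OF \<Omega>(1) \<Omega>H QH, symmetric] unitary_def left_mult_one_mat[OF QH])
  finally show ?thesis .
qed

lemma unitary_rotation_compression:
  assumes A: "A \<in> carrier_mat n n" and Q: "Q \<in> carrier_mat n k"
    and \<Omega>: "\<Omega> \<in> carrier_mat k k" "unitary \<Omega>" and D: "D \<in> carrier_mat k k"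
    and eig: "mat_adjoint Q * A * Q = \<Omega> * D * mat_adjoint \<Omega>"
  shows "mat_adjoint (Q * \<Omega>) * A * (Q * \<Omega>) = D"
proof -
  have QH: "mat_adjoint Q \<in> carrier_mat k n" and \<Omega>H: "mat_adjoint \<Omega> \<in> carrier_mat k k"
    using Q \<Omega> by (auto simp: mat_adjoint_carrier)
  have QHA: "mat_adjoint Q * A \<in> carrier_mat k n" using QH A by simp
  have unit: "mat_adjoint \<Omega> * \<Omega> = 1\<^sub>m k" using \<Omega> by (simp add: unitary_def)
  have "mat_adjoint (Q * \<Omega>) * A * (Q * \<Omega>) = mat_adjoint \<Omega> * ((mat_adjoint Q * A) * (Q * \<Omega>))"
    by (simp only: mat_adjoint_mult[OF Q \<Omega>(1)] assoc_mult_mat[OF \<Omega>H QH A]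
        assoc_mult_mat[OF \<Omega>H QHA mult_carrier_mat[OF Q \<Omega>(1)]])
  also have "(mat_adjoint Q * A) * (Q * \<Omega>) = \<Omega> * D * mat_adjoint \<Omega> * \<Omega>"
    by (simp only: assoc_mult_mat[OF QHA Q \<Omega>(1), symmetric] eig)
  also have "\<dots> = \<Omega> * D"
    by (simp only: assoc_mult_mat[OF mult_carrier_mat[OF \<Omega>(1) D] \<Omega>H \<Omega>(1)] unit
        right_mult_one_mat[OF mult_carrier_mat[OF \<Omega>(1) D]])
  also have "mat_adjoint \<Omega> * (\<Omega> * D) = D"
    by (simp only: assoc_mult_mat[OF \<Omega>H \<Omega>(1) D, symmetric] unit left_mult_one_mat[OF D])
  finally show ?thesis .
qed

lemma unitary_hcat_resolution:
  assumes "Q \<in> carrier_mat n k" "P \<in> carrier_mat n p" "unitary (hcat Q P)"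
  shows "Q * mat_adjoint Q + P * mat_adjoint P = 1\<^sub>m n"
  using hcat_mult_adjoint[OF assms(1,2)] assms by (simp add: unitary_def hcat_def)

lemma ereal_gap_quotient_bound:
  assumes G: "0 < G" and Gt: "G * ereal t \<le> ereal r" and t: "0 \<le> t"
    and s: "s \<le> t * c" and c: "0 \<le> c"
  shows "ereal s \<le> ereal r / G * ereal c"
proof (cases G)
  case (real g)
  with G Gt have "t \<le> r / g" by (simp add: field_simps)
  then have "s \<le> r / g * c" using s c by (meson mult_right_mono order_trans)
  then show ?thesis using real G by simp
next
  case PInf
  with Gt t have "t = 0" by (cases "t = 0") (auto simp: ereal_mult_infty)
  then show ?thesis using PInf s by simp
qed (use G in simp)

lemma sqrt_one_plus_sq_le: "0 \<le> t \<Longrightarrow> sqrt (1 + t\<^sup>2) \<le> 1 + t"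
  by (rule real_le_lsqrt) (auto simp: power2_sum)

lemma ereal_gap_bounds:
  fixes G :: ereal and g r t s \<rho> :: real
  assumes G: "0 \<le> G" "G * ereal t \<le> ereal r" and t: "0 \<le> t" and r: "0 \<le> r"
    and \<rho>: "0 \<le> \<rho>" and g: "0 \<le> g" and s: "0 < g \<Longrightarrow> s \<le> t * sqrt (1 + \<rho>\<^sup>2 / g\<^sup>2)"
  shows "ereal s \<le> (if G = 0 \<or> g = 0 then \<infinity> else ereal r / G * ereal (sqrt (1 + \<rho>\<^sup>2 / g\<^sup>2))) \<and>
    (if G = 0 \<or> g = 0 then \<infinity> else ereal r / G * ereal (sqrt (1 + \<rho>\<^sup>2 / g\<^sup>2))) \<le>
    (if G = 0 \<or> g = 0 then \<infinity> else ereal r / G * ereal (1 + \<rho> / g))"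
proof (cases "G = 0 \<or> g = 0")
  case False
  with G g have "0 < G" "0 < g" by (simp_all add: less_le)
  have "ereal s \<le> ereal r / G * ereal (sqrt (1 + \<rho>\<^sup>2 / g\<^sup>2))"
    using ereal_gap_quotient_bound[OF \<open>0 < G\<close> G(2) t s[OF \<open>0 < g\<close>]] by simp
  moreover have "ereal r / G * ereal (sqrt (1 + \<rho>\<^sup>2 / g\<^sup>2)) \<le> ereal r / G * ereal (1 + \<rho> / g)"
    using sqrt_one_plus_sq_le[of "\<rho> / g"] \<rho> g r G
    by (intro ereal_mult_left_mono) (simp_all add: power_divide zero_le_divide_ereal)
  ultimately show ?thesis using False by simp
qed simp

theorem theorem3p1:
  fixes n k :: nat and A Q Q\<^sub>p \<Omega> :: "complex mat" and lh :: "nat \<Rightarrow> real"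
    and lam :: complex and x :: "complex vec"
  assumes "A \<in> carrier_mat n n" and "hermitian A"
    and "Q \<in> carrier_mat n k" and "2 \<le> k" and "k \<le> n"
    and "mat_adjoint Q * Q = 1\<^sub>m k"
    and "\<Omega> \<in> carrier_mat k k" and "unitary \<Omega>"
    and "mat_adjoint Q * A * Q = \<Omega> * diagm k lh * mat_adjoint \<Omega>"
    and "Q\<^sub>p \<in> carrier_mat n (n - k)" and "unitary (hcat Q Q\<^sub>p)"
    and "x \<in> carrier_vec n" and "vnorm x = 1" and "A *\<^sub>v x = lam \<cdot>\<^sub>v x"
  shows
    "let Xh = Q * \<Omega>;
         xh = col Xh 0;
         R = mat_adjoint Q\<^sub>p * A * Q * \<Omega>;
         A\<^sub>3 = mat_adjoint Q\<^sub>p * A * Q\<^sub>p;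
         R\<^sub>2 = mat (n - k) (k - 1) (\<lambda>(i,j). R $$ (i, j + 1));
         Gap = dist_spec lam A\<^sub>3;
         gap = Min ((\<lambda>i. cmod (lam - complex_of_real (lh i))) ` {1..<k});
         B\<^sub>1 = (if Gap = 0 \<or> gap = 0 then \<infinity>
               else ereal (snorm R) / Gap * ereal (sqrt (1 + (snorm R\<^sub>2)\<^sup>2 / gap\<^sup>2)));
         B\<^sub>2 = (if Gap = 0 \<or> gap = 0 then \<infinity>
               else ereal (snorm R) / Gap * ereal (1 + snorm R\<^sub>2 / gap))
     in ereal (sin (vangle x xh)) \<le> B\<^sub>1 \<and> B\<^sub>1 \<le> B\<^sub>2"
proof -
  note A = assms(1,2) and Q = assms(3) and \<Omega> = assms(7,8) and Q\<^sub>p = assms(10)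
    and x = assms(12-14)
  define V where "V = Q * \<Omega>"
  define gap where "gap = Min ((\<lambda>i. cmod (lam - complex_of_real (lh i))) ` {1..<k})"
  have V: "V \<in> carrier_mat n k" using Q \<Omega> by (simp add: V_def)
  have resolution: "V * mat_adjoint V + Q\<^sub>p * mat_adjoint Q\<^sub>p = 1\<^sub>m n"
    using unitary_hcat_resolution[OF Q Q\<^sub>p assms(11)] unitary_rotation_mult_adjoint[OF Q \<Omega>]
    by (simp add: V_def)
  have diag: "mat_adjoint V * A * V = diagm k lh"
    using unitary_rotation_compression[OF A(1) Q \<Omega> diagm_carrier assms(9)] by (simp add: V_def)
  have R_V: "mat_adjoint Q\<^sub>p * A * Q * \<Omega> = mat_adjoint Q\<^sub>p * A * V"
    unfolding V_def
    by (rule assoc_mult_mat[OF mult_carrier_mat[OF mat_adjoint_carrier[OF Q\<^sub>p] A(1)] Q \<Omega>(1)])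
  have k: "0 < k" "1 < k" using assms(4) by simp_all
  have gap_le: "gap \<le> cmod (lam - complex_of_real (lh i))" if "i \<in> {1..<k}" for i
    unfolding gap_def using that by (intro Min_le) auto
  show ?thesis
    unfolding Let_def R_V V_def[symmetric] gap_def[symmetric]
  proof (rule ereal_gap_bounds[OF dist_spec_nonneg ritz_residual_gap_bound[OF A V Q\<^sub>p k(1) resolution x]
        vnorm_nonneg snorm_nonneg snorm_nonneg])
    show "0 \<le> gap"
      unfolding gap_def using k by (intro Min.boundedI) auto
  qed (use V k ritz_vector_sin_bound[OF A V Q\<^sub>p k(1) resolution x k(2) diag _ gap_le] in simp_all)
qed

end
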